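(* Let $r\ge1$ and let $\mathcal{R}$ be a Rouquier block of $\mathcal{A}_e^r$ which is not a core block. Let $(\boldsymbol\lambda,\mathbf{s})\in\mathcal{R}$ and write $\eta(\lambda^{(k)},s_k)=(\boldsymbol\rho^k,\mathbf{t}^k)$ for $1\le k\le r$. Then for all $1\le k\le r$ and all $0\le i<i'\le e-1$ we have $t^k_{i'}-t^k_i\ge-1$.
   Context: Fix an integer $e\ge 2$. A partition is a weakly decreasing sequence $\lambda=(\lambda_1,\lambda_2,\dots)$ of non-negative integers with finite sum $|\lambda|$; $\Lambda$ denotes the set of partitions and $\Lambda^{(m)}$ the set of $m$-multipartitions, i.e. $m$-tuples $\boldsymbol\lambda=(\lambda^{(1)},\dots,\lambda^{(m)})$ of partitions, with $|\boldsymbol\lambda|=\sum_k|\lambda^{(k)}|$. A $\beta$-set is a subset $B\subseteq\mathbb{Z}$ containing all sufficiently small integers and no sufficiently large ones. For $\lambda\in\Lambda$ and $s\in\mathbb{Z}$ set $B_s(\lambda)=\{\lambda_i-i+s : i\ge 1\}$; every $\beta$-set equals $B_s(\lambda)$ for a unique pair $(\lambda,s)$. Let $\mathcal{A}_e=\Lambda\times\mathbb{Z}$ (abacus configurations with $e$ runners) and $\mathcal{A}_e^m=\Lambda^{(m)}\times\mathbb{Z}^m$. Blocks: for $(\boldsymbol\lambda,\mathbf{s})\in\mathcal{A}_e^m$, its $e$-residue multiset is the multiset of the values $s_k+y-x \bmod e$ over all nodes $(x,y,k)$ with $x\ge1$, $1\le y\le\lambda^{(k)}_x$, $1\le k\le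 m$. Define $(\boldsymbol\lambda,\mathbf{s})\approx_e(\boldsymbol\mu,\mathbf{s}')$ iff $\mathbf{s}=\mathbf{s}'$, $|\boldsymbol\lambda|=|\boldsymbol\mu|$ and the $e$-residue multisets coincide. Its equivalence classes are called blocks. The map $\eta$: for $(\lambda,s)\in\mathcal{A}_e$ with $B=B_s(\lambda)$ and $0\le i<e$, the set $C_i=\{(b-i)/e : b\in B,\ b\equiv i \bmod e\}$ is a $\beta$-set, so $C_i=B_{t_i}(\rho_i)$ for a unique $(\rho_i,t_i)\in\Lambda\times\mathbb{Z}$; set $\eta(\lambda,s)=((\rho_0,\dots,\rho_{e-1}),(t_0,\dots,t_{e-1}))$. The $e$-weight of $\lambda$ is $\mathrm{wt}(\lambda)=\sum_i|\rho_i|$ (it is positive iff $\lambda$ has a removable $e$-rim hook). Rouquier: $(\lambda,s)\in\mathcal{A}_e$ with $\eta(\lambda,s)=(\boldsymbol\rho,\mathbf{t})$ is a Rouquier partition if $\mathrm{wt}(\lambda)\le t_{i+1}-t_i+1$ for all $0\le i<e-1$. $(\boldsymbol\lambda,\mathbf{s})\in\mathcal{A}_e^r$ is a Rouquier multipartition if $(\lambda^{(k)},s_k)$ is a Rouquier partition for every $1\le k\le r$. A block of $\mathcal{A}_e^r$ is a Rouquier block if all its elements are Rouquier multipartitions. A block $\mathcal{R}$ of $\mathcal{A}_e^r$ is a core block if for every $(\boldsymbol\lambda,\mathbf{s})\in\mathcal{R}$ every component $\lambda^{(k)}$ has $e$-weight $0$ (no removable $e$-rim hooks). *)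

theory Defs
  imports Main "HOL-Library.Multiset"
begin

definition is_partition :: "nat list \<Rightarrow> bool" where
  "is_partition lam \<longleftrightarrow> sorted_wrt (\<ge>) lam \<and> 0 \<notin> set lam"

definition part :: "nat list \<Rightarrow> nat \<Rightarrow> nat" where
  "part lam i = (if 1 \<le> i \<and> i \<le> length lam then lam ! (i - 1) else 0)"

definition psize :: "nat list \<Rightarrow> nat" where
  "psize lam = sum_list lam"

definition beta_set :: "nat list \<Rightarrow> int \<Rightarrow> int set" where
  "beta_set lam s = {int (part lam i) - int i + s | i. i \<ge> 1}"

definition runner_set :: "nat \<Rightarrow> int set \<Rightarrow> nat \<Rightarrow> int set" where
  "runner_set e B i = {(b - int i) div int e | b. b \<in> B \<and> b mod int e = int i}"

text \<open>eta(lambda,s) = ((rho_0,...,rho_{e-1}),(t_0,...,t_{e-1})), where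
  (rho_i,t_i) is the unique pair with B_{t_i}(rho_i) = C_i.\<close>

definition eta_pair :: "nat \<Rightarrow> nat list \<Rightarrow> int \<Rightarrow> nat \<Rightarrow> nat list \<times> int" where
  "eta_pair e lam s i = (THE (rho, t). is_partition rho \<and>
        beta_set rho t = runner_set e (beta_set lam s) i)"

definition eta_rho :: "nat \<Rightarrow> nat list \<Rightarrow> int \<Rightarrow> nat \<Rightarrow> nat list" where
  "eta_rho e lam s i = fst (eta_pair e lam s i)"

definition eta_t :: "nat \<Rightarrow> nat list \<Rightarrow> int \<Rightarrow> nat \<Rightarrow> int" where
  "eta_t e lam s i = snd (eta_pair e lam s i)"

definition weight :: "nat \<Rightarrow> nat list \<Rightarrow> int \<Rightarrow> nat" where
  "weight e lam s = (\<Sum>i<e. psize (eta_rho e lam s i))"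

definition rouquier_partition :: "nat \<Rightarrow> nat list \<Rightarrow> int \<Rightarrow> bool" where
  "rouquier_partition e lam s \<longleftrightarrow>
     (\<forall>i. i + 1 < e \<longrightarrow> int (weight e lam s) \<le> eta_t e lam s (i+1) - eta_t e lam s i + 1)"

text \<open>Multipartition configurations A_e^r: pairs of a list of r partitions and a
  list of r charges (components indexed 0..r-1).\<close>

definition configs :: "nat \<Rightarrow> (nat list list \<times> int list) set" where
  "configs r = {(lams, s). length lams = r \<and> length s = r \<and> (\<forall>l\<in>set lams. is_partition l)}"

definition msize :: "nat list list \<Rightarrow> nat" where
  "msize lams = (\<Sum>k<length lams. psize (lams ! k))"

definition residues :: "nat \<Rightarrow> nat list list \<Rightarrow> int list \<Rightarrow> int multiset" where
  "residues e lams s =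
     (\<Sum>k<length lams. \<Sum>x\<in>{1..length (lams ! k)}. \<Sum>y\<in>{1..part (lams ! k) x}.
        {# (s ! k + int y - int x) mod int e #})"

definition block_rel :: "nat \<Rightarrow> nat \<Rightarrow> ((nat list list \<times> int list) \<times> (nat list list \<times> int list)) set" where
  "block_rel e r = {((lams, s), (mus, s')). (lams, s) \<in> configs r \<and> (mus, s') \<in> configs r \<and>
       s = s' \<and> msize lams = msize mus \<and> residues e lams s = residues e mus s'}"

definition blocks :: "nat \<Rightarrow> nat \<Rightarrow> (nat list list \<times> int list) set set" where
  "blocks e r = configs r // block_rel e r"

definition rouquier_multipartition :: "nat \<Rightarrow> nat list list \<Rightarrow> int list \<Rightarrow> bool" where
  "rouquier_multipartition e lams s \<longleftrightarrow>
     (\<forall>k<length lams. rouquier_partition e (lams ! k) (s ! k))"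

definition rouquier_block :: "nat \<Rightarrow> (nat list list \<times> int list) set \<Rightarrow> bool" where
  "rouquier_block e R \<longleftrightarrow> (\<forall>(lams, s)\<in>R. rouquier_multipartition e lams s)"

definition core_block :: "nat \<Rightarrow> (nat list list \<times> int list) set \<Rightarrow> bool" where
  "core_block e R \<longleftrightarrow> (\<forall>(lams, s)\<in>R. \<forall>k<length lams. weight e (lams ! k) (s ! k) = 0)"

end

theory Submission
  imports Defs
begin

text \<open>For multipartitions with a fixed multicharge s, the number of nodes of residue c is an
  affine function, with coefficients depending only on s, of the column sums of the runner charges
  t^k_i and of the total of 2 wt(\<lambda>^(k)) + \<Sum>_i (t^k_i^2 - t^k_i). These data therefore determine
  the block, and since every choice of runner charges and weight is realised by a partition, two
  components of an element may be replaced freely as long as the data are kept.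

  In a non-core Rouquier block, moving all weight of some element onto a single component shows via
  the Rouquier condition that every component of that element has weakly increasing charges, so all
  column differences \<Sum>_k (t^k_i' - t^k_i) are nonnegative. If one component dropped by 2 or more,
  some other component m would rise; trading a unit of charge between the two and moving all weight
  onto m produces an element of the block violating the Rouquier bound for m.\<close>

section \<open>Partitions and beta-sets\<close>

lemma part_antimono:
  assumes "is_partition lam" "1 \<le> i" "i \<le> j"
  shows "part lam j \<le> part lam i"
proof (cases "j \<le> length lam \<and> i < j")
  case True
  hence "i - 1 < j - 1" "j - 1 < length lam" using assms(2) by auto
  hence "lam ! (j - 1) \<le> lam ! (i - 1)"
    using assms(1) sorted_wrt_nth_less unfolding is_partition_def by fastforce
  thus ?thesis using True assms by (simp add: part_def)
next
  case False
  thus ?thesis using assms by (auto simp: part_def)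
qed

lemma part_pos:
  assumes "is_partition lam" "1 \<le> j" "j \<le> length lam"
  shows "part lam j > 0"
proof -
  have "lam ! (j - 1) \<in> set lam" using assms by simp
  hence "lam ! (j - 1) \<noteq> 0" using assms(1) unfolding is_partition_def by metis
  thus ?thesis using assms by (simp add: part_def)
qed

lemma partition_eqI:
  assumes "is_partition l1" "is_partition l2" "\<And>j. 1 \<le> j \<Longrightarrow> part l1 j = part l2 j"
  shows "l1 = l2"
proof -
  have "\<not> length l1 < length l2" if "is_partition l2" "\<And>j. 1 \<le> j \<Longrightarrow> part l1 j = part l2 j"
    for l1 l2
    using part_pos[OF that(1), of "Suc (length l1)"] that(2)[of "Suc (length l1)"]
    by (auto simp: part_def)
  hence len: "length l1 = length l2"
    using assms by (metis linorder_neqE_nat)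
  show ?thesis
  proof (rule nth_equalityI[OF len])
    fix i assume "i < length l1"
    thus "l1 ! i = l2 ! i" using assms(3)[of "Suc i"] len by (simp add: part_def)
  qed
qed

lemma psize_eq_sum_part:
  assumes "length lam \<le> L"
  shows "psize lam = (\<Sum>j\<in>{1..L}. part lam j)"
proof -
  have "psize lam = (\<Sum>i<length lam. lam ! i)"
    by (simp add: psize_def sum_list_sum_nth atLeast0LessThan)
  also have "\<dots> = (\<Sum>j\<in>{1..length lam}. part lam j)"
    by (rule sum.reindex_bij_witness[where i="\<lambda>j. j - 1" and j="Suc"]) (auto simp: part_def)
  also have "\<dots> = (\<Sum>j\<in>{1..L}. part lam j)"
    by (rule sum.mono_neutral_left) (use assms in \<open>auto simp: part_def\<close>)
  finally show ?thesis .
qed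

lemma partition_of_parts:
  fixes f :: "nat \<Rightarrow> nat"
  assumes "\<And>j. 1 \<le> j \<Longrightarrow> f (Suc j) \<le> f j" "\<And>j. m < j \<Longrightarrow> f j = 0"
  shows "\<exists>lam. is_partition lam \<and> (\<forall>j\<ge>1. part lam j = f j) \<and> length lam \<le> m"
  using assms(2)
proof (induction m)
  case 0
  show ?case by (rule exI[of _ "[]"]) (use 0 in \<open>auto simp: is_partition_def part_def\<close>)
next
  case (Suc m)
  show ?case
  proof (cases "f (Suc m) = 0")
    case True
    hence "\<And>j. m < j \<Longrightarrow> f j = 0" using Suc.prems by (metis Suc_lessI)
    from Suc.IH[OF this] show ?thesis by (meson le_Suc_eq)
  next
    case False
    have mono: "f j \<le> f i" if "1 \<le> i" "i \<le> j" for i j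
      using that(2) by (induction j rule: dec_induct) (use assms(1) that(1) order_trans in auto)
    define lam where "lam = map f [1..<Suc (Suc m)]"
    have "sorted_wrt (\<ge>) lam"
      unfolding lam_def sorted_wrt_map
      by (rule sorted_wrt_mono_rel[OF _ sorted_wrt_upt]) (auto intro: mono)
    moreover have "f j > 0" if "1 \<le> j" "j \<le> Suc m" for j
      using mono[OF that] False by simp
    hence "0 \<notin> set lam" unfolding lam_def by (force simp del: upt_Suc simp: less_Suc_eq_le)
    moreover have "part lam j = f j" if "1 \<le> j" for j
      using that Suc.prems[of j] unfolding lam_def part_def by (auto simp del: upt_Suc)
    ultimately show ?thesis unfolding is_partition_def by (intro exI[of _ lam]) (simp add: lam_def)
  qed
qed

definition beta_num :: "nat list \<Rightarrow> int \<Rightarrow> nat \<Rightarrow> int" where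
  "beta_num lam s x = int (part lam x) - int x + s"

lemma beta_num_strict_decr:
  assumes "is_partition lam" "1 \<le> x" "x < y"
  shows "beta_num lam s y < beta_num lam s x"
  using part_antimono[OF assms(1,2), of y] assms(3) unfolding beta_num_def by simp

lemma inj_on_beta_num: "is_partition lam \<Longrightarrow> inj_on (beta_num lam s) {1..L}"
  unfolding inj_on_def
  by (metis atLeastAtMost_iff beta_num_strict_decr linorder_neqE_nat order_less_irrefl)

lemma beta_set_eq:
  assumes "is_partition lam" "length lam \<le> L"
  shows "beta_set lam s = beta_num lam s ` {1..L} \<union> {..<s - int L}"
proof
  show "beta_set lam s \<subseteq> beta_num lam s ` {1..L} \<union> {..<s - int L}"
    using assms(2) by (force simp: beta_set_def beta_num_def part_def)
next
  have "b \<in> beta_set lam s" if "b < s - int L" for b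
  proof -
    have "part lam (nat (s - b)) = 0" using that assms(2) by (auto simp: part_def)
    thus ?thesis unfolding beta_set_def using that by (intro CollectI exI[of _ "nat (s - b)"]) auto
  qed
  thus "beta_num lam s ` {1..L} \<union> {..<s - int L} \<subseteq> beta_set lam s"
    by (auto simp: beta_set_def beta_num_def)
qed

lemma beta_set_above:
  assumes "is_partition lam" "length lam \<le> L"
  shows "beta_set lam s \<inter> {s - int L..} = beta_num lam s ` {1..L}"
  using beta_set_eq[OF assms, of s] by (auto simp: beta_num_def)

lemma charge_eq_card_beta_set_above:
  assumes "is_partition lam" "z \<le> s - int (length lam)"
  shows "s = z + int (card (beta_set lam s \<inter> {z..}))"
proof -
  define L where "L = nat (s - z)"
  have "length lam \<le> L" "s - int L = z" using assms unfolding L_def by auto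
  thus ?thesis
    using beta_set_above[OF assms(1)] card_image[OF inj_on_beta_num[OF assms(1)]] by force
qed

lemma strict_decr_image_eqD:
  fixes f g :: "nat \<Rightarrow> int"
  assumes "\<And>x y. 1 \<le> x \<Longrightarrow> x < y \<Longrightarrow> f y < f x"
    "\<And>x y. 1 \<le> x \<Longrightarrow> x < y \<Longrightarrow> g y < g x"
    "f ` {1..L} = g ` {1..L}"
  shows "\<forall>x\<in>{1..L}. f x = g x"
  using assms(3)
proof (induction L)
  case (Suc L)
  text \<open>The last value is the minimum of the image, for f and for g alike.\<close>
  have min: "h (Suc L) = Min (h ` {1..Suc L})" "h ` {1..L} = h ` {1..Suc L} - {h (Suc L)}"
    if "\<And>x y. 1 \<le> x \<Longrightarrow> x < y \<Longrightarrow> h y < h x" for h :: "nat \<Rightarrow> int"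
  proof -
    have lt: "1 \<le> x \<Longrightarrow> x \<le> L \<Longrightarrow> h (Suc L) < h x" for x using that by simp
    show "h (Suc L) = Min (h ` {1..Suc L})"
      using lt by (intro Min_eqI[symmetric]) (force simp: le_Suc_eq)+
    show "h ` {1..L} = h ` {1..Suc L} - {h (Suc L)}"
      using lt by (force simp: le_Suc_eq)
  qed
  have eq: "f (Suc L) = g (Suc L)" using min(1)[of f, OF assms(1)] min(1)[of g, OF assms(2)] Suc.prems by simp
  hence "f ` {1..L} = g ` {1..L}" using min(2)[of f, OF assms(1)] min(2)[of g, OF assms(2)] Suc.prems by simp
  from Suc.IH[OF this] eq show ?case by (auto simp: le_Suc_eq)
qed simp

lemma beta_set_inj:
  assumes "is_partition r1" "is_partition r2" "beta_set r1 t1 = beta_set r2 t2"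
  shows "r1 = r2 \<and> t1 = t2"
proof -
  define z where "z = min (t1 - int (length r1)) (t2 - int (length r2))"
  have t: "t1 = t2"
    using charge_eq_card_beta_set_above[OF assms(1), of z t1]
      charge_eq_card_beta_set_above[OF assms(2), of z t2] assms(3)
    unfolding z_def by simp
  define L where "L = max (length r1) (length r2)"
  have "beta_num r1 t1 ` {1..L} = beta_num r2 t2 ` {1..L}"
    using beta_set_above[OF assms(1), of L t1] beta_set_above[OF assms(2), of L t2] assms(3) t
    unfolding L_def by simp
  hence "\<forall>x\<in>{1..L}. beta_num r1 t1 x = beta_num r2 t2 x"
    by (rule strict_decr_image_eqD[rotated 2]) (use beta_num_strict_decr assms in auto)
  hence "part r1 j = part r2 j" if "1 \<le> j" for j
    using that t by (cases "j \<le> L") (auto simp: beta_num_def L_def part_def)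
  thus ?thesis using partition_eqI assms t by blast
qed

lemma sorted_nth_ge_add_index:
  fixes ys :: "int list"
  assumes "sorted_wrt (<) ys" "set ys \<subseteq> {a..}" "k < length ys"
  shows "ys ! k \<ge> a + int k"
  using assms(3)
proof (induction k)
  case 0 thus ?case using assms(2) nth_mem by fastforce
next
  case (Suc k)
  have "ys ! k < ys ! Suc k" using assms(1) Suc.prems sorted_wrt_nth_less by fastforce
  thus ?case using Suc by simp
qed

lemma image_rev_nth: "(\<lambda>j. xs ! (length xs - j)) ` {1..length xs} = set xs"
proof -
  have "k \<in> (\<lambda>j. length xs - j) ` {1..length xs}" if "k < length xs" for k
    using that by (intro image_eqI[of _ _ "length xs - k"]) auto
  hence "(\<lambda>j. length xs - j) ` {1..length xs} = {..<length xs}" by auto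
  hence "(\<lambda>j. xs ! (length xs - j)) ` {1..length xs} = (!) xs ` {..<length xs}"
    by (metis image_image)
  thus ?thesis by (auto simp: set_conv_nth)
qed

lemma double_psize_eq_sum_beta_num:
  assumes "length lam \<le> L"
  shows "2 * int (psize lam) = 2 * (\<Sum>x\<in>{1..L}. beta_num lam s x) + int L * (int L + 1) - 2 * int L * s"
proof -
  have "int (psize lam) = (\<Sum>x\<in>{1..L}. beta_num lam s x) + (\<Sum>x\<in>{1..L}. int x) - int L * s"
    using psize_eq_sum_part[OF assms] by (simp add: beta_num_def sum.distrib sum_subtractf)
  thus ?thesis using double_gauss_sum_from_Suc_0[where 'a=int, of L] by simp
qed

text \<open>The size formula says |rho| = \<Sum>Y - \<Sum>j<|Y|. (a + j), doubled to stay integral.\<close>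

lemma beta_set_of_finite:
  fixes Y :: "int set" and a :: int
  assumes "finite Y" "Y \<subseteq> {a..}"
  shows "\<exists>rho. is_partition rho \<and> beta_set rho (a + int (card Y)) = Y \<union> {..<a} \<and>
     2 * int (psize rho) = 2 * \<Sum>Y - int (card Y)^2 + int (card Y) - 2 * a * int (card Y)"
proof -
  define ys where "ys = sorted_list_of_set Y"
  define m where "m = card Y"
  define t where "t = a + int m"
  have sorted: "sorted_wrt (<) ys" and set_ys: "set ys = Y" and len: "length ys = m"
    unfolding ys_def m_def using assms(1) by simp_all
  have ge: "ys ! k \<ge> a + int k" if "k < m" for k
    using sorted_nth_ge_add_index[OF sorted] set_ys assms(2) len that by auto
  have lt: "ys ! i < ys ! j" if "i < j" "j < m" for i j
    using sorted len sorted_wrt_nth_less that by fastforce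
  text \<open>The j-th part is read off from the j-th largest bead.\<close>
  define v where "v j = ys ! (m - j) + int j - t" for j
  have v_nonneg: "v j \<ge> 0" if "1 \<le> j" "j \<le> m" for j
    using ge[of "m - j"] that unfolding v_def t_def by simp
  define f where "f j = (if 1 \<le> j \<and> j \<le> m then nat (v j) else 0)" for j
  have "f (Suc j) \<le> f j" if "1 \<le> j" for j
  proof (cases "Suc j \<le> m")
    case True
    hence "ys ! (m - Suc j) < ys ! (m - j)" using that by (intro lt) auto
    thus ?thesis using that True unfolding f_def v_def by simp
  qed (simp add: f_def)
  moreover have "\<And>j. m < j \<Longrightarrow> f j = 0" unfolding f_def by simp
  ultimately obtain lam where lam: "is_partition lam" "\<forall>j\<ge>1. part lam j = f j" "length lam \<le> m"
    using partition_of_parts[of f m] by blast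
  have beta_num_eq: "beta_num lam t j = ys ! (m - j)" if "j \<in> {1..m}" for j
    using that lam(2) v_nonneg unfolding beta_num_def f_def v_def by auto
  have "(\<lambda>j. ys ! (m - j)) ` {1..m} = Y" using image_rev_nth[of ys] len set_ys by simp
  hence image: "beta_num lam t ` {1..m} = Y" using beta_num_eq by simp
  hence beta: "beta_set lam t = Y \<union> {..<a}"
    using beta_set_eq[OF lam(1) lam(3), of t] by (simp add: t_def)
  have "(\<Sum>x\<in>{1..m}. beta_num lam t x) = \<Sum>Y"
    using sum.reindex[OF inj_on_beta_num[OF lam(1), of t m], of id] image by simp
  hence "2 * int (psize lam) = 2 * \<Sum>Y - int m ^ 2 + int m - 2 * a * int m"
    using double_psize_eq_sum_beta_num[OF lam(3), of t] by (simp add: t_def algebra_simps power2_eq_square)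
  thus ?thesis using lam(1) beta unfolding t_def m_def by blast
qed

section \<open>Runners of the e-abacus\<close>

lemma abacus_pos_eq_iff:
  assumes "e > 0" "i < e" "j < e"
  shows "int e * y + int i = int e * z + int j \<longleftrightarrow> i = j \<and> y = z"
proof
  assume eq: "int e * y + int i = int e * z + int j"
  hence "(int e * y + int i) mod int e = (int e * z + int j) mod int e" by simp
  hence "i = j" using assms by simp
  thus "i = j \<and> y = z" using eq assms(1) by simp
qed simp

lemma abacus_pos_ge_iff:
  assumes "e > 0" "i < e"
  shows "int e * a \<le> int e * y + int i \<longleftrightarrow> a \<le> y"
proof
  assume "int e * a \<le> int e * y + int i"
  hence "int e * a < int e * (y + 1)" using assms(2) by (simp add: algebra_simps)
  thus "a \<le> y" using assms(1) by (simp add: mult_less_cancel_left)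
next
  assume "a \<le> y"
  thus "int e * a \<le> int e * y + int i" using mult_left_mono[of a y "int e"] by simp
qed

lemma abacus_pos_exists:
  assumes "e > 0"
  obtains i y where "i < e" "b = int e * y + int i"
proof
  show "nat (b mod int e) < e" using assms by (simp add: nat_less_iff)
  show "b = int e * (b div int e) + int (nat (b mod int e))" using assms by simp
qed

lemma runner_set_eq:
  assumes "e > 0" "i < e"
  shows "runner_set e B i = {y. int e * y + int i \<in> B}"
proof -
  have b_eq: "b = int e * ((b - int i) div int e) + int i" if "b mod int e = int i" for b
  proof -
    have "b - int i = int e * (b div int e)" using that minus_mod_eq_mult_div[of b "int e"] by simp
    thus ?thesis using assms(1) by simp
  qed
  have "(int e * y + int i) mod int e = int i" for y using assms by simp
  thus ?thesis unfolding runner_set_def using b_eq assms(1) by force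
qed

lemma eta_pair_eqI:
  assumes "is_partition rho" "beta_set rho t = runner_set e (beta_set lam s) i"
  shows "eta_pair e lam s i = (rho, t)"
  unfolding eta_pair_def
  by (rule the_equality)
    (auto simp: assms(1) assms(2)[symmetric] dest: beta_set_inj[OF _ assms(1)])

lemma eta_of_runner:
  fixes C :: "int set" and a :: int
  defines "Y \<equiv> C \<inter> {a..}"
  assumes "C = runner_set e (beta_set lam s) i" "{..<a} \<subseteq> C" "finite Y"
  shows "eta_t e lam s i = a + int (card Y)"
    "2 * int (psize (eta_rho e lam s i)) = 2 * \<Sum>Y - int (card Y)^2 + int (card Y) - 2 * a * int (card Y)"
proof -
  obtain rho where rho: "is_partition rho" "beta_set rho (a + int (card Y)) = Y \<union> {..<a}"
     "2 * int (psize rho) = 2 * \<Sum>Y - int (card Y)^2 + int (card Y) - 2 * a * int (card Y)"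
    using beta_set_of_finite[OF assms(4)] unfolding Y_def by auto
  have "Y \<union> {..<a} = C" using assms(3) unfolding Y_def by auto
  hence "eta_pair e lam s i = (rho, a + int (card Y))"
    using eta_pair_eqI[OF rho(1)] rho(2) assms(2) by simp
  thus "eta_t e lam s i = a + int (card Y)"
    "2 * int (psize (eta_rho e lam s i)) = 2 * \<Sum>Y - int (card Y)^2 + int (card Y) - 2 * a * int (card Y)"
    unfolding eta_t_def eta_rho_def using rho(3) by auto
qed

definition runner_top :: "nat \<Rightarrow> nat list \<Rightarrow> int \<Rightarrow> int \<Rightarrow> nat \<Rightarrow> int set" where
  "runner_top e lam s a i = {y. int e * y + int i \<in> beta_set lam s} \<inter> {a..}"

lemma inj_on_abacus_pos:
  "e > 0 \<Longrightarrow> inj_on (\<lambda>(i, y). int e * y + int i) (SIGMA i:{..<e}. Y i)"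
  by (auto simp: inj_on_def abacus_pos_eq_iff)

context
  fixes e :: nat and lam :: "nat list" and s :: int and L :: nat and a :: int
  assumes e_pos: "e > 0" and lam: "is_partition lam" and length_lam: "length lam \<le> L"
    and aligned: "int e * a = s - int L"
begin

lemma beta_num_image_eq_runner_tops:
  "beta_num lam s ` {1..L} = (\<lambda>(i, y). int e * y + int i) ` (SIGMA i:{..<e}. runner_top e lam s a i)"
proof -
  have "beta_num lam s ` {1..L} = beta_set lam s \<inter> {int e * a..}"
    using beta_set_above[OF lam length_lam] aligned by simp
  moreover have "b \<in> (\<lambda>(i, y). int e * y + int i) ` (SIGMA i:{..<e}. runner_top e lam s a i)"
    if "b \<in> beta_set lam s" "int e * a \<le> b" for b
  proof -
    obtain i y where "i < e" "b = int e * y + int i" using abacus_pos_exists[OF e_pos] .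
    thus ?thesis using that abacus_pos_ge_iff[OF e_pos] unfolding runner_top_def by force
  qed
  ultimately show ?thesis using abacus_pos_ge_iff[OF e_pos] unfolding runner_top_def by auto
qed

lemma finite_runner_top:
  assumes "i < e"
  shows "finite (runner_top e lam s a i)"
proof -
  have "(\<lambda>y. int e * y + int i) ` runner_top e lam s a i \<subseteq> beta_num lam s ` {1..L}"
    using beta_num_image_eq_runner_tops assms by force
  hence "finite ((\<lambda>y. int e * y + int i) ` runner_top e lam s a i)" by (rule finite_subset) simp
  moreover have "inj_on (\<lambda>y. int e * y + int i) (runner_top e lam s a i)"
    using e_pos by (simp add: inj_on_def)
  ultimately show ?thesis using finite_imageD by blast
qed

lemma sum_beta_num_by_runners:
  "(\<Sum>x\<in>{1..L}. g (beta_num lam s x)) = (\<Sum>i<e. \<Sum>y\<in>runner_top e lam s a i. g (int e * y + int i))"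
proof -
  have "(\<Sum>x\<in>{1..L}. g (beta_num lam s x)) = (\<Sum>b\<in>beta_num lam s ` {1..L}. g b)"
    using sum.reindex[OF inj_on_beta_num[OF lam], of g] by simp
  also have "\<dots> = (\<Sum>(i, y)\<in>(SIGMA i:{..<e}. runner_top e lam s a i). g (int e * y + int i))"
    unfolding beta_num_image_eq_runner_tops
    using sum.reindex[OF inj_on_abacus_pos[OF e_pos], of g] by (simp add: case_prod_unfold)
  also have "\<dots> = (\<Sum>i<e. \<Sum>y\<in>runner_top e lam s a i. g (int e * y + int i))"
    using sum.Sigma[of "{..<e}" "runner_top e lam s a", symmetric] finite_runner_top by simp
  finally show ?thesis .
qed

text \<open>Below the aligned position e a every runner is full, so the charge and quotient of runner i
  are read off from its finitely many beads at heights \<ge> a.\<close>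

lemma eta_eq_runner_top:
  assumes "i < e"
  defines "Y \<equiv> runner_top e lam s a i"
  shows "eta_t e lam s i = a + int (card Y)"
    "2 * int (psize (eta_rho e lam s i)) = 2 * \<Sum>Y - int (card Y)^2 + int (card Y) - 2 * a * int (card Y)"
proof -
  define C where "C = runner_set e (beta_set lam s) i"
  have C: "C = {y. int e * y + int i \<in> beta_set lam s}"
    unfolding C_def using runner_set_eq[OF e_pos assms(1)] .
  have "int e * y + int i < s - int L" if "y < a" for y
    using abacus_pos_ge_iff[OF e_pos assms(1), of a y] that aligned by simp
  hence "{..<a} \<subseteq> C" unfolding C using beta_set_eq[OF lam length_lam, of s] by auto
  moreover have "C \<inter> {a..} = Y" unfolding C Y_def runner_top_def by simp
  ultimately show "eta_t e lam s i = a + int (card Y)"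
    "2 * int (psize (eta_rho e lam s i)) = 2 * \<Sum>Y - int (card Y)^2 + int (card Y) - 2 * a * int (card Y)"
    using eta_of_runner[OF C_def] finite_runner_top[OF assms(1)] unfolding Y_def by auto
qed

end

lemma exists_aligned_bound:
  assumes "e > 0"
  obtains L a where "M \<le> L" "int e * a = s - int L"
proof
  show "M \<le> M + nat ((s - int M) mod int e)" by simp
  show "int e * ((s - int M) div int e) = s - int (M + nat ((s - int M) mod int e))"
    using assms by (simp add: algebra_simps minus_mod_eq_mult_div[symmetric])
qed

lemma sum_eta_t:
  assumes "e > 0" "is_partition lam"
  shows "(\<Sum>i<e. eta_t e lam s i) = s"
proof -
  obtain L a where L: "length lam \<le> L" "int e * a = s - int L"
    using exists_aligned_bound[OF assms(1)] .
  have "(\<Sum>i<e. eta_t e lam s i) = (\<Sum>i<e. a + int (card (runner_top e lam s a i)))"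
    using eta_eq_runner_top(1)[OF assms L] by simp
  also have "\<dots> = int e * a + (\<Sum>i<e. \<Sum>y\<in>runner_top e lam s a i. 1)"
    by (simp add: sum.distrib)
  also have "(\<Sum>i<e. \<Sum>y\<in>runner_top e lam s a i. 1) = (\<Sum>x\<in>{1..L}. 1::int)"
    using sum_beta_num_by_runners[OF assms L, of "\<lambda>_. 1"] by (rule sym)
  finally show ?thesis using L by simp
qed

text \<open>An abacus with charges t whose quotient is the one-row partition (w) on runner 0 and empty
  on all other runners.\<close>

definition runner_beads :: "(nat \<Rightarrow> int) \<Rightarrow> nat \<Rightarrow> nat \<Rightarrow> int set" where
  "runner_beads t w i = (if i = 0 then {..<t 0 - 1} \<union> {t 0 - 1 + int w} else {..<t i})"

definition abacus_beta_set :: "nat \<Rightarrow> (nat \<Rightarrow> int) \<Rightarrow> nat \<Rightarrow> int set" where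
  "abacus_beta_set e t w = {int e * y + int i | i y. i < e \<and> y \<in> runner_beads t w i}"

lemma runner_set_abacus_beta_set:
  assumes "e > 0" "i < e"
  shows "runner_set e (abacus_beta_set e t w) i = runner_beads t w i"
proof -
  have "int e * y + int i \<in> abacus_beta_set e t w \<longleftrightarrow> y \<in> runner_beads t w i" for y
  proof
    assume "int e * y + int i \<in> abacus_beta_set e t w"
    then obtain j z where "j < e" "z \<in> runner_beads t w j" "int e * y + int i = int e * z + int j"
      unfolding abacus_beta_set_def by blast
    thus "y \<in> runner_beads t w i" using abacus_pos_eq_iff[OF assms(1,2)] by auto
  qed (use assms(2) in \<open>auto simp: abacus_beta_set_def\<close>)
  thus ?thesis unfolding runner_set_eq[OF assms] by simp
qed

lemma abacus_beta_set_is_beta_set: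
  assumes e: "e > 0"
  shows "\<exists>lam s'. is_partition lam \<and> beta_set lam s' = abacus_beta_set e t w"
proof -
  define M where "M = (\<Sum>i<e. \<bar>t i\<bar>)"
  have M: "\<bar>t i\<bar> \<le> M" if "i < e" for i
    unfolding M_def using that by (intro member_le_sum) auto
  define a where "a = - M - 1"
  define X where "X = abacus_beta_set e t w \<inter> {int e * a..}"
  have below: "{..<int e * a} \<subseteq> abacus_beta_set e t w"
  proof
    fix b assume "b \<in> {..<int e * a}"
    moreover obtain i y where iy: "i < e" "b = int e * y + int i" using abacus_pos_exists[OF e] .
    ultimately have "y < a" using abacus_pos_ge_iff[OF e iy(1), of a y] by auto
    hence "y \<in> runner_beads t w i"
      using M[OF iy(1)] M[of 0] e unfolding runner_beads_def a_def by auto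
    thus "b \<in> abacus_beta_set e t w" using iy unfolding abacus_beta_set_def by blast
  qed
  have "X \<subseteq> {int e * a .. int e * (M + int w) + int e}"
  proof
    fix b assume "b \<in> X"
    then obtain i y where iy: "i < e" "y \<in> runner_beads t w i" "b = int e * y + int i" "b \<ge> int e * a"
      unfolding X_def abacus_beta_set_def by auto
    have "y \<le> M + int w" using iy(2) M[OF iy(1)] M[of 0] e unfolding runner_beads_def
      by (auto split: if_splits)
    hence "int e * y \<le> int e * (M + int w)" by (simp add: mult_left_mono)
    thus "b \<in> {int e * a .. int e * (M + int w) + int e}"
      unfolding atLeastAtMost_iff using iy(1,3,4) by linarith
  qed
  hence "finite X" by (rule finite_subset) simp
  then obtain rho where "is_partition rho" "beta_set rho (int e * a + int (card X)) = X \<union> {..<int e * a}"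
    using beta_set_of_finite[of X "int e * a"] unfolding X_def by auto
  moreover have "X \<union> {..<int e * a} = abacus_beta_set e t w" using below unfolding X_def by auto
  ultimately show ?thesis by auto
qed

lemma exists_partition_with_eta:
  assumes e: "e > 0"
  shows "\<exists>lam. is_partition lam \<and> (\<forall>i<e. eta_t e lam (\<Sum>i<e. t i) i = t i) \<and> weight e lam (\<Sum>i<e. t i) = w"
proof -
  obtain lam s' where lam: "is_partition lam" and B: "beta_set lam s' = abacus_beta_set e t w"
    using abacus_beta_set_is_beta_set[OF e] by blast
  have runner: "runner_set e (beta_set lam s') i = runner_beads t w i" if "i < e" for i
    using runner_set_abacus_beta_set[OF e that] B by simp
  have runner0: "eta_t e lam s' 0 = t 0 \<and> psize (eta_rho e lam s' 0) = w"
  proof -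
    have "runner_beads t w 0 \<inter> {t 0 - 1..} = {t 0 - 1 + int w}"
      unfolding runner_beads_def by auto
    moreover have "{..<t 0 - 1} \<subseteq> runner_beads t w 0" unfolding runner_beads_def by auto
    ultimately show ?thesis
      using eta_of_runner[OF runner[OF e, symmetric], of "t 0 - 1"] by simp
  qed
  have runner_pos: "eta_t e lam s' i = t i \<and> psize (eta_rho e lam s' i) = 0" if "0 < i" "i < e" for i
  proof -
    have "runner_beads t w i = {..<t i}" unfolding runner_beads_def using that by simp
    moreover have "{..<t i} \<inter> {t i..} = {}" by auto
    ultimately show ?thesis using eta_of_runner[OF runner[OF that(2), symmetric], of "t i"] by simp
  qed
  have t: "\<forall>i<e. eta_t e lam s' i = t i" using runner0 runner_pos by (metis neq0_conv)
  have "weight e lam s' = psize (eta_rho e lam s' 0) + (\<Sum>i\<in>{..<e} - {0}. psize (eta_rho e lam s' i))"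
    unfolding weight_def using e by (simp add: sum.remove)
  hence "weight e lam s' = w" using runner0 runner_pos by simp
  moreover have "s' = (\<Sum>i<e. t i)" using sum_eta_t[OF e lam, of s'] t by simp
  ultimately show ?thesis using lam t by blast
qed

section \<open>Residues counted on the abacus\<close>

lemma div_plus_one_eq:
  fixes z e :: int
  assumes "e > 0"
  shows "(z + 1) div e = z div e + (if (z + 1) mod e = 0 then 1 else 0)"
proof (cases "z mod e + 1 = e")
  case True
  moreover have "z = e * (z div e) + z mod e" by simp
  ultimately have eq: "z + 1 = e * (z div e + 1) + 0" unfolding distrib_left by linarith
  thus ?thesis using assms int_div_pos_eq[OF eq] int_mod_pos_eq[OF eq] by simp
next
  case False
  hence "z mod e + 1 < e" using pos_mod_bound[OF assms, of z] by linarith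
  moreover have eq: "z + 1 = e * (z div e) + (z mod e + 1)" by simp
  moreover have "0 \<le> z mod e" using assms by simp
  ultimately have "(z + 1) div e = z div e" "(z + 1) mod e = z mod e + 1"
    using int_div_pos_eq[OF eq] int_mod_pos_eq[OF eq] by simp_all
  thus ?thesis using \<open>0 \<le> z mod e\<close> by simp
qed

lemma card_residue_interval:
  fixes u c :: int
  assumes "e > 0" "0 \<le> c" "c < int e"
  shows "int (card {y\<in>{1..p}. (u + int y) mod int e = c}) = (u + int p - c) div int e - (u - c) div int e"
proof (induction p)
  case (Suc p)
  let ?P = "\<lambda>y. (u + int y) mod int e = c"
  have "{y\<in>{1..Suc p}. ?P y} = {y\<in>{1..p}. ?P y} \<union> (if ?P (Suc p) then {Suc p} else {})"
    by (auto simp: le_Suc_eq)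
  hence "int (card {y\<in>{1..Suc p}. ?P y}) = int (card {y\<in>{1..p}. ?P y}) + (if ?P (Suc p) then 1 else 0)"
    by (auto simp: card_insert_if)
  moreover have "(u + int (Suc p) - c) mod int e = 0 \<longleftrightarrow> ?P (Suc p)"
    using mod_eq_dvd_iff[of "u + int (Suc p)" "int e" c] assms(2,3) by (simp add: mod_eq_0_iff_dvd)
  moreover have "(u + int (Suc p) - c) div int e = (u + int p - c) div int e
      + (if (u + int (Suc p) - c) mod int e = 0 then 1 else 0)"
    using div_plus_one_eq[of "int e" "u + int p - c"] assms(1) by (simp add: algebra_simps)
  ultimately show ?case using Suc.IH by simp
qed simp

definition residue_count :: "nat \<Rightarrow> nat list \<Rightarrow> int \<Rightarrow> int \<Rightarrow> nat" where
  "residue_count e lam s v =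
     (\<Sum>x\<in>{1..length lam}. card {y\<in>{1..part lam x}. (s + int y - int x) mod int e = v})"

lemma sum_count_single:
  "finite A \<Longrightarrow> (\<Sum>x\<in>A. count {#f x#} v) = card {x\<in>A. f x = v}"
proof -
  have "count {#f x#} v = of_bool (f x = v)" for x by simp
  hence "(\<Sum>x\<in>A. count {#f x#} v) = (\<Sum>x\<in>A. of_bool (f x = v))" by (simp only:)
  also assume "finite A"
  hence "(\<Sum>x\<in>A. of_bool (f x = v)) = card {x\<in>A. f x = v}" by (simp add: Int_def)
  finally show ?thesis .
qed

lemma count_residues:
  "count (residues e lams s) v = (\<Sum>k<length lams. residue_count e (lams ! k) (s ! k) v)"
  unfolding residues_def residue_count_def count_sum
  by (simp only: sum_count_single finite_atLeastAtMost)

lemma msize_eq_size_residues: "msize lams = size (residues e lams s)"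
proof -
  have "psize lam = (\<Sum>x\<in>{1..length lam}. part lam x)" for lam by (rule psize_eq_sum_part) simp
  thus ?thesis unfolding residues_def msize_def size_multiset_sum by simp
qed

lemma count_residues_out_of_range:
  assumes "e > 0" "v < 0 \<or> v \<ge> int e"
  shows "count (residues e lams s) v = 0"
proof -
  have "z mod int e \<noteq> v" for z
    using assms by (metis Euclidean_Rings.pos_mod_bound Euclidean_Rings.pos_mod_sign not_le of_nat_0_less_iff)
  thus ?thesis unfolding count_residues residue_count_def by simp
qed

lemma residues_eq_iff_counts_below:
  assumes e: "e > 0"
  shows "residues e lams s = residues e mus s' \<longleftrightarrow>
    (\<forall>c<e. count (residues e lams s) (int c) = count (residues e mus s') (int c))"
proof
  assume in_range: "\<forall>c<e. count (residues e lams s) (int c) = count (residues e mus s') (int c)"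
  show "residues e lams s = residues e mus s'"
  proof (rule multiset_eqI)
    fix v
    show "count (residues e lams s) v = count (residues e mus s') v"
    proof (cases "v < 0 \<or> v \<ge> int e")
      case True
      thus ?thesis using count_residues_out_of_range[OF e] by simp
    next
      case False
      hence "v = int (nat v)" "nat v < e" by auto
      thus ?thesis using in_range by metis
    qed
  qed
qed simp

lemma residue_count_eq_sum_div:
  assumes "e > 0" "is_partition lam" "length lam \<le> L" "0 \<le> c" "c < int e"
  shows "int (residue_count e lam s c)
    = (\<Sum>x\<in>{1..L}. (beta_num lam s x - c) div int e - (s - int x - c) div int e)"
proof -
  have "int (residue_count e lam s c)
      = (\<Sum>x\<in>{1..L}. int (card {y\<in>{1..part lam x}. (s + int y - int x) mod int e = c}))"
    unfolding residue_count_def of_nat_sum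
    by (rule sum.mono_neutral_left) (use assms(3) in \<open>auto simp: part_def\<close>)
  also have "\<dots> = (\<Sum>x\<in>{1..L}. (beta_num lam s x - c) div int e - (s - int x - c) div int e)"
  proof (rule sum.cong[OF refl])
    fix x
    have "s + int y - int x = (s - int x) + int y" for y by simp
    thus "int (card {y\<in>{1..part lam x}. (s + int y - int x) mod int e = c})
        = (beta_num lam s x - c) div int e - (s - int x - c) div int e"
      using card_residue_interval[OF assms(1,4,5), where u="s - int x" and p="part lam x"]
      by (simp only:) (simp add: beta_num_def algebra_simps)
  qed
  finally show ?thesis .
qed

lemma div_abacus_pos:
  assumes "i < e" "c < e"
  shows "(int e * y + int i - int c) div int e = y - of_bool (i < c)"
proof (rule int_div_pos_eq)
  show "int e * y + int i - int c = int e * (y - of_bool (i < c)) + (int i - int c + int e * of_bool (i < c))"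
    by (simp add: algebra_simps)
qed (use assms in auto)

definition charge_form :: "nat \<Rightarrow> nat list \<Rightarrow> int \<Rightarrow> int" where
  "charge_form e lam s = 2 * int (weight e lam s) + (\<Sum>i<e. eta_t e lam s i * eta_t e lam s i - eta_t e lam s i)"

text \<open>The part of the residue count that does not depend on lam.\<close>

definition residue_offset :: "nat \<Rightarrow> int \<Rightarrow> nat \<Rightarrow> int \<Rightarrow> nat \<Rightarrow> int" where
  "residue_offset e s L a c =
     2 * int c * a - int e * (a * a - a) - 2 * (\<Sum>x\<in>{1..L}. (s - int x - int c) div int e)"

lemma double_residue_count_eq:
  assumes e: "e > 0" and lam: "is_partition lam" and L: "length lam \<le> L"
    and aligned: "int e * a = s - int L" and c: "c < e"
  shows "2 * int (residue_count e lam s (int c))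
    = charge_form e lam s - 2 * (\<Sum>i<c. eta_t e lam s i) + residue_offset e s L a c"
proof -
  define Y where "Y i = runner_top e lam s a i" for i
  define m where "m i = int (card (Y i))" for i
  define t where "t i = eta_t e lam s i" for i
  define P where "P i = int (psize (eta_rho e lam s i))" for i
  have t: "t i = a + m i" if "i < e" for i
    using eta_eq_runner_top(1)[OF e lam L aligned that] unfolding t_def m_def Y_def by simp
  have sum_Y: "2 * \<Sum>(Y i) = 2 * P i + (t i * t i - t i) - (a * a - a)" if "i < e" for i
    using eta_eq_runner_top(2)[OF e lam L aligned that] t[OF that]
    unfolding P_def m_def Y_def by (simp add: algebra_simps power2_eq_square)
  have "int (residue_count e lam s (int c))
      = (\<Sum>x\<in>{1..L}. (beta_num lam s x - int c) div int e) - (\<Sum>x\<in>{1..L}. (s - int x - int c) div int e)"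
    using residue_count_eq_sum_div[OF e lam L, of "int c" s] c by (simp add: sum_subtractf)
  also have "(\<Sum>x\<in>{1..L}. (beta_num lam s x - int c) div int e)
      = (\<Sum>i<e. \<Sum>y\<in>Y i. (int e * y + int i - int c) div int e)"
    using sum_beta_num_by_runners[OF e lam L aligned] unfolding Y_def by simp
  also have "\<dots> = (\<Sum>i<e. \<Sum>y\<in>Y i. y - of_bool (i < c))"
    using div_abacus_pos c by (intro sum.cong refl) simp
  also have "\<dots> = (\<Sum>i<e. \<Sum>(Y i)) - (\<Sum>i<e. m i * of_bool (i < c))"
    by (simp add: sum_subtractf m_def)
  also have "{..<e} \<inter> {i. i < c} = {..<c}" using c by auto
  hence "(\<Sum>i<e. m i * of_bool (i < c)) = (\<Sum>i<c. m i)" by simp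
  finally have "2 * int (residue_count e lam s (int c)) = (\<Sum>i<e. 2 * \<Sum>(Y i)) - 2 * (\<Sum>i<c. m i)
      - 2 * (\<Sum>x\<in>{1..L}. (s - int x - int c) div int e)"
    by (simp add: sum_distrib_left)
  also have "(\<Sum>i<e. 2 * \<Sum>(Y i)) = 2 * (\<Sum>i<e. P i) + (\<Sum>i<e. t i * t i - t i) - int e * (a * a - a)"
    using sum_Y by (simp add: sum.distrib sum_subtractf sum_distrib_left)
  also have "(\<Sum>i<c. m i) = (\<Sum>i<c. t i) - int c * a"
    using t c by (simp add: sum.distrib)
  finally show ?thesis
    unfolding charge_form_def residue_offset_def weight_def t_def P_def by (simp add: algebra_simps)
qed

lemma double_residue_count_diff:
  assumes "e > 0" "is_partition l1" "is_partition l2" "c < e"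
  shows "2 * int (residue_count e l1 s (int c)) - 2 * int (residue_count e l2 s (int c))
    = (charge_form e l1 s - 2 * (\<Sum>i<c. eta_t e l1 s i)) - (charge_form e l2 s - 2 * (\<Sum>i<c. eta_t e l2 s i))"
proof -
  obtain L a where L: "max (length l1) (length l2) \<le> L" and a: "int e * a = s - int L"
    using exists_aligned_bound[OF assms(1)] .
  hence "length l1 \<le> L" "length l2 \<le> L" by auto
  thus ?thesis
    using double_residue_count_eq[OF assms(1,2) _ a assms(4)] double_residue_count_eq[OF assms(1,3) _ a assms(4)]
    by simp
qed

section \<open>Blocks\<close>

lemma prefix_sums_eq_iff:
  fixes C1 C2 :: "nat \<Rightarrow> int"
  assumes "e > 0" and total: "(\<Sum>x<e. C1 x) = (\<Sum>x<e. C2 x)"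
  shows "(\<forall>c<e. Q1 - 2 * (\<Sum>x<c. C1 x) = Q2 - 2 * (\<Sum>x<c. C2 x)) \<longleftrightarrow> (\<forall>x<e. C1 x = C2 x) \<and> Q1 = Q2"
proof
  assume prefix: "\<forall>c<e. Q1 - 2 * (\<Sum>x<c. C1 x) = Q2 - 2 * (\<Sum>x<c. C2 x)"
  hence Q: "Q1 = Q2" using assms(1) by auto
  hence prefix_eq: "(\<Sum>x<c. C1 x) = (\<Sum>x<c. C2 x)" if "c \<le> e" for c
    using prefix total that by (cases "c = e") auto
  hence "C1 x = C2 x" if "x < e" for x
    using that prefix_eq[of "Suc x"] prefix_eq[of x] by simp
  thus "(\<forall>x<e. C1 x = C2 x) \<and> Q1 = Q2" using Q by simp
qed simp

lemma residues_eq_iff_charges: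
  assumes e: "e > 0" and "(lams, s) \<in> configs r" "(mus, s) \<in> configs r"
  shows "residues e lams s = residues e mus s \<longleftrightarrow>
    (\<forall>i<e. (\<Sum>k<r. eta_t e (lams ! k) (s ! k) i) = (\<Sum>k<r. eta_t e (mus ! k) (s ! k) i)) \<and>
    (\<Sum>k<r. charge_form e (lams ! k) (s ! k)) = (\<Sum>k<r. charge_form e (mus ! k) (s ! k))"
proof -
  have lams: "length lams = r" "\<forall>k<r. is_partition (lams ! k)"
    and mus: "length mus = r" "\<forall>k<r. is_partition (mus ! k)"
    using assms(2,3) by (auto simp: configs_def)
  define C where "C lm i = (\<Sum>k<r. eta_t e (lm ! k) (s ! k) i)" for lm i
  define Q where "Q lm = (\<Sum>k<r. charge_form e (lm ! k) (s ! k))" for lm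
  have count_diff: "2 * int (count (residues e lams s) (int c)) - 2 * int (count (residues e mus s) (int c))
      = (Q lams - 2 * (\<Sum>i<c. C lams i)) - (Q mus - 2 * (\<Sum>i<c. C mus i))" if "c < e" for c
  proof -
    have "2 * int (count (residues e lams s) (int c)) - 2 * int (count (residues e mus s) (int c))
      = (\<Sum>k<r. 2 * int (residue_count e (lams ! k) (s ! k) (int c)) - 2 * int (residue_count e (mus ! k) (s ! k) (int c)))"
      unfolding count_residues lams(1) mus(1) by (simp add: sum_subtractf sum_distrib_left)
    also have "\<dots> = (\<Sum>k<r. (charge_form e (lams ! k) (s ! k) - 2 * (\<Sum>i<c. eta_t e (lams ! k) (s ! k) i))
        - (charge_form e (mus ! k) (s ! k) - 2 * (\<Sum>i<c. eta_t e (mus ! k) (s ! k) i)))"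
      using double_residue_count_diff[OF e _ _ that] lams mus by (intro sum.cong refl) auto
    finally show ?thesis
      unfolding Q_def C_def by (simp add: sum_subtractf sum_distrib_left sum.swap[of _ "{..<c}"])
  qed
  have "residues e lams s = residues e mus s \<longleftrightarrow>
      (\<forall>c<e. count (residues e lams s) (int c) = count (residues e mus s) (int c))"
    by (rule residues_eq_iff_counts_below[OF e])
  also have "\<dots> \<longleftrightarrow> (\<forall>c<e. Q lams - 2 * (\<Sum>i<c. C lams i) = Q mus - 2 * (\<Sum>i<c. C mus i))"
  proof (intro all_cong imp_cong refl)
    fix c assume "c < e"
    from count_diff[OF this]
    show "count (residues e lams s) (int c) = count (residues e mus s) (int c)
        \<longleftrightarrow> Q lams - 2 * (\<Sum>i<c. C lams i) = Q mus - 2 * (\<Sum>i<c. C mus i)"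
      by (intro iffI) linarith+
  qed
  also have "\<dots> \<longleftrightarrow> (\<forall>i<e. C lams i = C mus i) \<and> Q lams = Q mus"
  proof (rule prefix_sums_eq_iff[OF e])
    have "(\<Sum>i<e. C lm i) = (\<Sum>k<r. s ! k)" if "\<forall>k<r. is_partition (lm ! k)" for lm
      unfolding C_def by (subst sum.swap) (simp add: sum_eta_t[OF e] that)
    thus "(\<Sum>i<e. C lams i) = (\<Sum>i<e. C mus i)" using lams mus by simp
  qed
  finally show ?thesis unfolding C_def Q_def .
qed

lemma block_rel_iff_charges:
  assumes "e > 0" "(lams, s) \<in> configs r" "(mus, s) \<in> configs r"
  shows "((lams, s), (mus, s)) \<in> block_rel e r \<longleftrightarrow>
    (\<forall>i<e. (\<Sum>k<r. eta_t e (lams ! k) (s ! k) i) = (\<Sum>k<r. eta_t e (mus ! k) (s ! k) i)) \<and>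
    (\<Sum>k<r. charge_form e (lams ! k) (s ! k)) = (\<Sum>k<r. charge_form e (mus ! k) (s ! k))"
  using residues_eq_iff_charges[OF assms] assms(2,3) msize_eq_size_residues[of _ e s]
  unfolding block_rel_def by auto

lemma equiv_block_rel: "equiv (configs r) (block_rel e r)"
  by (rule equivI) (auto simp: block_rel_def refl_on_def sym_def trans_def)

lemma block_subset_configs: "R \<in> blocks e r \<Longrightarrow> R \<subseteq> configs r"
  unfolding blocks_def by (rule in_quotient_imp_subset[OF equiv_block_rel])

lemma block_rel_of_mem_block: "R \<in> blocks e r \<Longrightarrow> X \<in> R \<Longrightarrow> Y \<in> R \<Longrightarrow> (X, Y) \<in> block_rel e r"
  unfolding blocks_def by (rule in_quotient_imp_in_rel[OF equiv_block_rel]) auto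

lemma block_closed: "R \<in> blocks e r \<Longrightarrow> X \<in> R \<Longrightarrow> (X, Y) \<in> block_rel e r \<Longrightarrow> Y \<in> R"
  unfolding blocks_def by (rule in_quotient_imp_closed[OF equiv_block_rel])

lemma sum_eq_except_two:
  fixes f g :: "nat \<Rightarrow> int"
  assumes "\<And>q. q < r \<Longrightarrow> q \<noteq> k \<Longrightarrow> q \<noteq> m \<Longrightarrow> f q = g q" "k \<noteq> m" "k < r" "m < r"
  shows "(\<Sum>q<r. f q) = (\<Sum>q<r. g q) + (f k - g k) + (f m - g m)"
proof -
  have "(\<Sum>q<r. f q - g q) = (\<Sum>q\<in>{k, m}. f q - g q)"
    by (rule sum.mono_neutral_right) (use assms in auto)
  thus ?thesis using assms(2) by (simp add: sum_subtractf)
qed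

lemma block_replace_two:
  assumes e: "e > 0" and R: "R \<in> blocks e r" and lams: "(lams, s) \<in> R"
    and km: "k < r" "m < r" "k \<noteq> m" and parts: "is_partition pk" "is_partition pm"
    and cols: "\<forall>i<e. eta_t e pk (s ! k) i + eta_t e pm (s ! m) i
      = eta_t e (lams ! k) (s ! k) i + eta_t e (lams ! m) (s ! m) i"
    and form: "charge_form e pk (s ! k) + charge_form e pm (s ! m)
      = charge_form e (lams ! k) (s ! k) + charge_form e (lams ! m) (s ! m)"
  shows "(lams[k := pk, m := pm], s) \<in> R"
proof -
  define mus where "mus = lams[k := pk, m := pm]"
  have conf: "(lams, s) \<in> configs r" using block_subset_configs[OF R] lams by blast
  hence len: "length lams = r" by (simp add: configs_def)
  have nth: "mus ! q = (if q = m then pm else if q = k then pk else lams ! q)" if "q < r" for q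
    using that len km unfolding mus_def by (auto simp: nth_list_update)
  have "is_partition (mus ! q)" if "q < r" for q
    using nth[OF that] parts conf that by (auto simp: configs_def)
  hence mus: "(mus, s) \<in> configs r"
    using conf len unfolding configs_def mus_def by (auto simp: in_set_conv_nth)
  have sum_rows: "(\<Sum>q<r. g q (mus ! q)) = (\<Sum>q<r. g q (lams ! q))
      + (g k pk - g k (lams ! k)) + (g m pm - g m (lams ! m))" for g :: "nat \<Rightarrow> nat list \<Rightarrow> int"
  proof -
    have "(\<Sum>q<r. g q (mus ! q)) = (\<Sum>q<r. g q (lams ! q))
        + (g k (mus ! k) - g k (lams ! k)) + (g m (mus ! m) - g m (lams ! m))"
      by (rule sum_eq_except_two) (simp_all add: nth km)
    thus ?thesis using nth km by simp
  qed
  have "((lams, s), (mus, s)) \<in> block_rel e r"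
  proof (subst block_rel_iff_charges[OF e conf mus], intro conjI allI impI)
    fix i assume "i < e"
    thus "(\<Sum>q<r. eta_t e (lams ! q) (s ! q) i) = (\<Sum>q<r. eta_t e (mus ! q) (s ! q) i)"
      using sum_rows[of "\<lambda>q p. eta_t e p (s ! q) i"] cols[rule_format, OF \<open>i < e\<close>] by linarith
  next
    show "(\<Sum>q<r. charge_form e (lams ! q) (s ! q)) = (\<Sum>q<r. charge_form e (mus ! q) (s ! q))"
      using sum_rows[of "\<lambda>q p. charge_form e p (s ! q)"] form by simp
  qed
  thus ?thesis using block_closed[OF R lams] unfolding mus_def by blast
qed

lemma block_realise_two_rows:
  assumes e: "e > 0" and R: "R \<in> blocks e r" and lams: "(lams, s) \<in> R"
    and km: "k < r" "m < r" "k \<noteq> m"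
    and sums: "(\<Sum>x<e. fk x) = s ! k" "(\<Sum>x<e. fm x) = s ! m"
    and cols: "\<forall>x<e. fk x + fm x = eta_t e (lams ! k) (s ! k) x + eta_t e (lams ! m) (s ! m) x"
    and form: "2 * int wk + (\<Sum>x<e. fk x * fk x - fk x) + (2 * int wm + (\<Sum>x<e. fm x * fm x - fm x))
      = charge_form e (lams ! k) (s ! k) + charge_form e (lams ! m) (s ! m)"
  obtains nu where "(nu, s) \<in> R" "\<forall>x<e. eta_t e (nu ! m) (s ! m) x = fm x" "weight e (nu ! m) (s ! m) = wm"
proof -
  obtain pk where pk: "is_partition pk" "\<forall>x<e. eta_t e pk (s ! k) x = fk x" "weight e pk (s ! k) = wk"
    using exists_partition_with_eta[OF e, of fk wk] sums(1) by auto
  obtain pm where pm: "is_partition pm" "\<forall>x<e. eta_t e pm (s ! m) x = fm x" "weight e pm (s ! m) = wm"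
    using exists_partition_with_eta[OF e, of fm wm] sums(2) by auto
  have "(lams[k := pk, m := pm], s) \<in> R"
  proof (rule block_replace_two[OF e R lams km pk(1) pm(1)])
    show "\<forall>x<e. eta_t e pk (s ! k) x + eta_t e pm (s ! m) x
        = eta_t e (lams ! k) (s ! k) x + eta_t e (lams ! m) (s ! m) x"
      using pk(2) pm(2) cols by simp
    show "charge_form e pk (s ! k) + charge_form e pm (s ! m)
        = charge_form e (lams ! k) (s ! k) + charge_form e (lams ! m) (s ! m)"
      using pk(2,3) pm(2,3) form by (simp add: charge_form_def)
  qed
  moreover have "lams[k := pk, m := pm] ! m = pm"
    using km block_subset_configs[OF R] lams by (auto simp: configs_def)
  ultimately show ?thesis using that pm(2,3) by simp
qed

section \<open>Rouquier blocks\<close>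

lemma rouquier_block_charge_step:
  assumes "rouquier_block e R" "R \<in> blocks e r" "(lams, s) \<in> R" "k < r" "Suc i < e"
  shows "int (weight e (lams ! k) (s ! k))
    \<le> eta_t e (lams ! k) (s ! k) (Suc i) - eta_t e (lams ! k) (s ! k) i + 1"
proof -
  have "length lams = r" using block_subset_configs[OF assms(2)] assms(3) by (auto simp: configs_def)
  thus ?thesis using assms(1,3,4,5)
    unfolding rouquier_block_def rouquier_multipartition_def rouquier_partition_def by fastforce
qed

lemma telescoping_lower_bound:
  fixes g :: "nat \<Rightarrow> int"
  assumes "\<And>x. Suc x < e \<Longrightarrow> g x + D \<le> g (Suc x)" "i \<le> i'" "i' < e"
  shows "g i + int (i' - i) * D \<le> g i'"
  using assms(2,3)
proof (induction i' rule: dec_induct)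
  case (step n)
  hence "g n + D \<le> g (Suc n)" using assms(1) by simp
  thus ?case using step by (simp add: Suc_diff_le algebra_simps)
qed simp

lemma rouquier_block_charges_mono:
  assumes e: "e > 0" and R: "R \<in> blocks e r" and rouq: "rouquier_block e R" and mu: "(mu, s) \<in> R"
    and j: "j < r" "weight e (mu ! j) (s ! j) > 0" and l: "l < r"
    and "i \<le> i'" "i' < e"
  shows "eta_t e (mu ! l) (s ! l) i \<le> eta_t e (mu ! l) (s ! l) i'"
proof -
  have parts: "is_partition (mu ! q)" if "q < r" for q
    using block_subset_configs[OF R] mu that by (auto simp: configs_def)
  have "eta_t e (mu ! l) (s ! l) x \<le> eta_t e (mu ! l) (s ! l) (Suc x)" if x: "Suc x < e" for x
  proof (cases "l = j")
    case True
    thus ?thesis using rouquier_block_charge_step[OF rouq R mu l x] j by simp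
  next
    case False
    define t where "t q = eta_t e (mu ! q) (s ! q)" for q
    define w where "w = weight e (mu ! j) (s ! j) + weight e (mu ! l) (s ! l)"
    obtain nu where nu: "(nu, s) \<in> R" "\<forall>x<e. eta_t e (nu ! l) (s ! l) x = t l x"
        "weight e (nu ! l) (s ! l) = w"
    proof (rule block_realise_two_rows[OF e R mu j(1) l not_sym[OF False], where fk="t j" and wk=0])
      show "(\<Sum>x<e. t j x) = s ! j" "(\<Sum>x<e. t l x) = s ! l"
        unfolding t_def using sum_eta_t[OF e parts] j(1) l by auto
      show "2 * int 0 + (\<Sum>x<e. t j x * t j x - t j x) + (2 * int w + (\<Sum>x<e. t l x * t l x - t l x))
          = charge_form e (mu ! j) (s ! j) + charge_form e (mu ! l) (s ! l)"
        by (simp add: charge_form_def t_def w_def)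
    qed (use j(1) l t_def in auto)
    thus ?thesis using rouquier_block_charge_step[OF rouq R nu(1) l x] x j(2) unfolding w_def t_def by simp
  qed
  thus ?thesis using telescoping_lower_bound[of e "eta_t e (mu ! l) (s ! l)" 0] assms by simp
qed

definition unit_shift :: "nat \<Rightarrow> nat \<Rightarrow> nat \<Rightarrow> int" where
  "unit_shift i i' x = of_bool (x = i') - of_bool (x = i)"

lemma sum_unit_shift:
  fixes f :: "nat \<Rightarrow> int"
  assumes "i < e" "i' < e" "i \<noteq> i'"
  shows "(\<Sum>x<e. f x + c * unit_shift i i' x) = (\<Sum>x<e. f x)"
    and "(\<Sum>x<e. (f x + c * unit_shift i i' x) * (f x + c * unit_shift i i' x) - (f x + c * unit_shift i i' x))
      = (\<Sum>x<e. f x * f x - f x) + 2 * c * (f i' - f i) + 2 * c * c"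
proof -
  have weighted: "(\<Sum>x<e. g x * unit_shift i i' x) = g i' - g i" for g :: "nat \<Rightarrow> int"
    using assms by (simp add: unit_shift_def right_diff_distrib sum_subtractf)
  have square: "unit_shift i i' x * unit_shift i i' x = of_bool (x = i') + of_bool (x = i)" for x
    using assms(3) by (simp add: unit_shift_def)
  show "(\<Sum>x<e. f x + c * unit_shift i i' x) = (\<Sum>x<e. f x)"
    using weighted[of "\<lambda>_. c"] by (simp add: sum.distrib mult.commute)
  have "(\<Sum>x<e. unit_shift i i' x * unit_shift i i' x) = 2"
    unfolding square using assms by (simp add: sum.distrib)
  moreover have "(\<Sum>x<e. unit_shift i i' x) = 0" using weighted[of "\<lambda>_. 1"] by simp
  moreover have "(f x + c * unit_shift i i' x) * (f x + c * unit_shift i i' x) - (f x + c * unit_shift i i' x)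
      = (f x * f x - f x) + 2 * c * (f x * unit_shift i i' x)
        + c * c * (unit_shift i i' x * unit_shift i i' x) - c * unit_shift i i' x" for x
    by (simp add: algebra_simps)
  ultimately show "(\<Sum>x<e. (f x + c * unit_shift i i' x) * (f x + c * unit_shift i i' x) - (f x + c * unit_shift i i' x))
      = (\<Sum>x<e. f x * f x - f x) + 2 * c * (f i' - f i) + 2 * c * c"
    using weighted[of f] by (simp add: sum.distrib sum_subtractf sum_distrib_left[symmetric])
qed

lemma rouquier_block_no_opposite_moves:
  assumes e: "e > 0" and R: "R \<in> blocks e r" and rouq: "rouquier_block e R" and lams: "(lams, s) \<in> R"
    and km: "k < r" "m < r" "k \<noteq> m" and ii: "i < i'" "i' < e"
    and rise: "eta_t e (lams ! m) (s ! m) i < eta_t e (lams ! m) (s ! m) i'"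
  shows "eta_t e (lams ! k) (s ! k) i - 1 \<le> eta_t e (lams ! k) (s ! k) i'"
proof (rule ccontr)
  define t where "t q = eta_t e (lams ! q) (s ! q)" for q
  define A where "A = t k i - t k i'"
  define d where "d = t m i' - t m i"
  assume "\<not> ?thesis"
  hence A: "A \<ge> 2" unfolding A_def t_def by simp
  have d: "d \<ge> 1" using rise unfolding d_def t_def by simp
  text \<open>Trading a unit of charge changes \<Sum>(t^2 - t) by 2 - 2A on component k and by 2 - 2d on
    component m, so giving m the weight of both components plus A - 2 + d keeps the charge form.\<close>
  define W where "W = weight e (lams ! k) (s ! k) + weight e (lams ! m) (s ! m) + nat (A - 2 + d)"
  have W: "int W \<ge> d" unfolding W_def using A d by simp
  define fk where "fk x = t k x + 1 * unit_shift i i' x" for x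
  define fm where "fm x = t m x + (- 1) * unit_shift i i' x" for x
  have parts: "is_partition (lams ! q)" if "q < r" for q
    using block_subset_configs[OF R] lams that by (auto simp: configs_def)
  have shift: "i < e" "i' < e" "i \<noteq> i'" using ii by auto
  obtain nu where nu: "(nu, s) \<in> R" "\<forall>x<e. eta_t e (nu ! m) (s ! m) x = fm x"
      "weight e (nu ! m) (s ! m) = W"
  proof (rule block_realise_two_rows[OF e R lams km, where fk=fk and wk=0])
    show "(\<Sum>x<e. fk x) = s ! k" "(\<Sum>x<e. fm x) = s ! m"
      unfolding fk_def fm_def sum_unit_shift(1)[OF shift] t_def using sum_eta_t[OF e parts] km by auto
    show "\<forall>x<e. fk x + fm x = eta_t e (lams ! k) (s ! k) x + eta_t e (lams ! m) (s ! m) x"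
      by (simp add: fk_def fm_def t_def)
    show "2 * int 0 + (\<Sum>x<e. fk x * fk x - fk x) + (2 * int W + (\<Sum>x<e. fm x * fm x - fm x))
        = charge_form e (lams ! k) (s ! k) + charge_form e (lams ! m) (s ! m)"
      unfolding fk_def fm_def sum_unit_shift(2)[OF shift]
      using A d by (simp add: charge_form_def t_def W_def A_def d_def algebra_simps)
  qed
  hence "fm x + (int W - 1) \<le> fm (Suc x)" if "Suc x < e" for x
    using rouquier_block_charge_step[OF rouq R nu(1) km(2) that] nu(2,3) that by simp
  hence "fm i + int (i' - i) * (int W - 1) \<le> fm i'"
    using telescoping_lower_bound[of e fm "int W - 1" i i'] ii by simp
  moreover have "int (i' - i) * (int W - 1) \<ge> 1 * (int W - 1)"
    using ii W d by (intro mult_right_mono) auto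
  moreover have "fm i' - fm i = d - 2" using ii unfolding fm_def d_def unit_shift_def by simp
  ultimately show False using W by simp
qed

lemma rouquier_noncore_column_sum_mono:
  assumes e: "e > 0" and R: "R \<in> blocks e r" and rouq: "rouquier_block e R" and "\<not> core_block e R"
    and lams: "(lams, s) \<in> R" and "i \<le> i'" "i' < e"
  shows "(\<Sum>q<r. eta_t e (lams ! q) (s ! q) i) \<le> (\<Sum>q<r. eta_t e (lams ! q) (s ! q) i')"
proof -
  obtain mu s' j where mu: "(mu, s') \<in> R" and j: "j < length mu" "weight e (mu ! j) (s' ! j) \<noteq> 0"
    using assms(4) unfolding core_block_def by auto
  have rel: "((lams, s), (mu, s')) \<in> block_rel e r" using block_rel_of_mem_block[OF R lams mu] .
  hence "s' = s" "(lams, s) \<in> configs r" "(mu, s) \<in> configs r" unfolding block_rel_def by auto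
  hence cols: "\<forall>x<e. (\<Sum>q<r. eta_t e (lams ! q) (s ! q) x) = (\<Sum>q<r. eta_t e (mu ! q) (s ! q) x)"
    using rel block_rel_iff_charges[OF e] by blast
  have "j < r" using j(1) \<open>(mu, s) \<in> configs r\<close> by (simp add: configs_def)
  hence "(\<Sum>q<r. eta_t e (mu ! q) (s ! q) i) \<le> (\<Sum>q<r. eta_t e (mu ! q) (s ! q) i')"
    using rouquier_block_charges_mono[OF e R rouq _ _ _ _ assms(6,7)] mu j \<open>s' = s\<close>
    by (intro sum_mono) auto
  thus ?thesis using cols assms(6,7) by simp
qed

lemma exists_pos_summand_other:
  fixes d :: "nat \<Rightarrow> int"
  assumes "0 \<le> (\<Sum>q<r. d q)" "k < r" "d k < 0"
  obtains m where "m < r" "m \<noteq> k" "0 < d m"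
proof -
  have "\<exists>m<r. m \<noteq> k \<and> 0 < d m"
  proof (rule ccontr)
    assume "\<not> ?thesis"
    hence "(\<Sum>q\<in>{..<r} - {k}. d q) \<le> 0" by (intro sum_nonpos) auto
    moreover have "(\<Sum>q<r. d q) = d k + (\<Sum>q\<in>{..<r} - {k}. d q)" using assms(2) by (simp add: sum.remove)
    ultimately show False using assms(1,3) by simp
  qed
  thus ?thesis using that by blast
qed

theorem lemma3p18:
  fixes e r :: nat and R :: "(nat list list \<times> int list) set"
    and lams :: "nat list list" and s :: "int list"
  assumes "e \<ge> 2" and "r \<ge> 1"
    and "R \<in> blocks e r" and "rouquier_block e R" and "\<not> core_block e R"
    and "(lams, s) \<in> R"
  shows "\<forall>k<r. \<forall>i i'. i < i' \<and> i' \<le> e - 1 \<longrightarrow>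
           eta_t e (lams ! k) (s ! k) i' - eta_t e (lams ! k) (s ! k) i \<ge> -1"
proof (intro allI impI, elim conjE)
  fix k i i' assume k: "k < r" and ii: "i < i'" "i' \<le> e - 1"
  define t where "t q = eta_t e (lams ! q) (s ! q)" for q
  have e: "e > 0" and i': "i' < e" using assms(1) ii by auto
  show "t k i' - t k i \<ge> -1"
  proof (rule ccontr)
    assume drop: "\<not> t k i' - t k i \<ge> -1"
    have "0 \<le> (\<Sum>q<r. t q i' - t q i)"
      using rouquier_noncore_column_sum_mono[OF e assms(3-6) less_imp_le[OF ii(1)] i']
      unfolding t_def by (simp add: sum_subtractf)
    moreover have "t k i' - t k i < 0" using drop by simp
    ultimately obtain m where m: "m < r" "m \<noteq> k" "0 < t m i' - t m i"
      by (rule exists_pos_summand_other[OF _ k])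
    thus False
      using rouquier_block_no_opposite_moves[OF e assms(3,4,6) k m(1) not_sym[OF m(2)] ii(1) i'] drop
      unfolding t_def by simp
  qed
qed

end
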